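(* Let $j\in\mathbb Z$, and let $\lambda,\mu$ be partitions such that $\lambda$ has an addable node $\mathfrak l$ in column $j$ and $\mu$ has an addable node in column $j$; set $\lambda^+=\lambda\cup\{\mathfrak l\}$. Then $\mathrm e_{\lambda^+\mu}=\mathrm e_{\lambda\mu}$.
   Context: Partitions are identified with Young diagrams $\{(a,b)\in\mathbb N^2:b\le\lambda_a\}$; nodes are elements of $\mathbb N^2$; $(a,b)$ has height $a+b$ and lies in column $b-a$ (smaller column = further left). An addable node of $\lambda$ is a node not in $\lambda$ whose addition gives a partition. $\mathtt{NE}(\mathfrak n)=\mathfrak n+(0,1)$, $\mathtt{SW}(\mathfrak n)=\mathfrak n-(0,1)$, $\mathtt{SE}(\mathfrak n)=\mathfrak n-(1,0)$. A tile is a finite nonempty set of nodes orderable $\mathfrak n_1,\dots,\mathfrak n_r$ with $\mathfrak n_{i+1}\in\{\mathtt{NE}(\mathfrak n_i),\mathtt{SE}(\mathfrak n_i)\}$; start = leftmost node, end = rightmost node; Dyck tile if start and end both attain the maximal height of its nodes. A Dyck tiling of $\lambda\setminus\mu$ is a partition of it into Dyck tiles. It is cover-expansive if whenever $\mathfrak a,\mathtt{SE}(\mathfrak a)\in\lambda\setminus\mu$, the tile of $\mathtt{SE}(\mathfrak a)$ starts weakly left of the start of the tile of $\mathfrak a$, and whenever $\mathfrak a,\mathtt{SW}(\mathfrak a)\in\lambda\setminus\mu$, the tile of $\mathtt{SW}(\mathfrak a)$ ends weakly right of the end of the tile of $\mathfrak a$. $\mathrm e_{\lambda\mu}$ is the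 number of cover-expansive Dyck tilings of $\lambda\setminus\mu$ if $\lambda\supseteq\mu$, and $0$ otherwise. *)

theory Defs
  imports "HOL-Library.Disjoint_Sets"
begin

type_synonym node = "int \<times> int"

definition is_partition :: "nat list \<Rightarrow> bool" where
  "is_partition lam \<longleftrightarrow> sorted_wrt (\<ge>) lam \<and> 0 \<notin> set lam"

text \<open>Young diagram: nodes (a,b) with a, b \<ge> 1 and b \<le> lam_a (rows indexed from 1).\<close>
definition young :: "nat list \<Rightarrow> node set" where
  "young lam = {(a, b). 1 \<le> a \<and> a \<le> int (length lam) \<and> 1 \<le> b \<and> b \<le> int (lam ! nat (a - 1))}"

definition height :: "node \<Rightarrow> int" where
  "height n = fst n + snd n"

definition col :: "node \<Rightarrow> int" where
  "col n = snd n - fst n"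

definition NE :: "node \<Rightarrow> node" where "NE n = (fst n, snd n + 1)"
definition SW :: "node \<Rightarrow> node" where "SW n = (fst n, snd n - 1)"
definition SE :: "node \<Rightarrow> node" where "SE n = (fst n - 1, snd n)"

definition addable :: "nat list \<Rightarrow> node \<Rightarrow> bool" where
  "addable lam n \<longleftrightarrow> n \<notin> young lam \<and> (\<exists>nu. is_partition nu \<and> young nu = insert n (young lam))"

definition is_tile :: "node set \<Rightarrow> bool" where
  "is_tile T \<longleftrightarrow> (\<exists>ns. ns \<noteq> [] \<and> set ns = T \<and>
      (\<forall>i. Suc i < length ns \<longrightarrow> ns ! Suc i \<in> {NE (ns ! i), SE (ns ! i)}))"

definition tile_start :: "node set \<Rightarrow> node" where
  "tile_start T = (THE n. n \<in> T \<and> (\<forall>m\<in>T. col n \<le> col m))"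

definition tile_end :: "node set \<Rightarrow> node" where
  "tile_end T = (THE n. n \<in> T \<and> (\<forall>m\<in>T. col m \<le> col n))"

definition is_dyck_tile :: "node set \<Rightarrow> bool" where
  "is_dyck_tile T \<longleftrightarrow> is_tile T \<and>
      height (tile_start T) = Max (height ` T) \<and> height (tile_end T) = Max (height ` T)"

definition dyck_tiling :: "node set \<Rightarrow> node set set \<Rightarrow> bool" where
  "dyck_tiling S P \<longleftrightarrow> partition_on S P \<and> (\<forall>T\<in>P. is_dyck_tile T)"

definition tile_of :: "node set set \<Rightarrow> node \<Rightarrow> node set" where
  "tile_of P x = (THE T. T \<in> P \<and> x \<in> T)"

definition cover_expansive :: "node set \<Rightarrow> node set set \<Rightarrow> bool" where
  "cover_expansive S P \<longleftrightarrow>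
     (\<forall>a. a \<in> S \<and> SE a \<in> S \<longrightarrow> col (tile_start (tile_of P (SE a))) \<le> col (tile_start (tile_of P a))) \<and>
     (\<forall>a. a \<in> S \<and> SW a \<in> S \<longrightarrow> col (tile_end (tile_of P a)) \<le> col (tile_end (tile_of P (SW a))))"

definition e_num :: "nat list \<Rightarrow> nat list \<Rightarrow> nat" where
  "e_num lam mu = (if young mu \<subseteq> young lam
     then card {P. dyck_tiling (young lam - young mu) P \<and> cover_expansive (young lam - young mu) P}
     else 0)"

end

theory Submission
  imports Defs
begin

text \<open>
  Let \<open>m\<close> be the addable node of \<open>\<mu>\<close> in column \<open>j\<close>. If \<open>\<mu> \<subseteq> \<lambda>\<^sup>+\<close>, then \<open>m\<close> lies
  weakly below \<open>l\<close> in that column, so \<open>l \<in> \<mu>\<close> would force \<open>m \<in> \<mu>\<close>; hence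
  \<open>\<mu> \<subseteq> \<lambda>\<^sup>+\<close> iff \<open>\<mu> \<subseteq> \<lambda>\<close>, and then all column nodes strictly between \<open>m\<close> and
  \<open>l\<close> lie in \<open>\<lambda>\<setminus>\<mu>\<close>. Going up the column from \<open>m\<close>, cover-expansiveness shows
  inductively that the tile of a column node contains neither its SE nor its SW neighbour:
  otherwise it would be forced to contain the column node below as well. Hence in every
  cover-expansive Dyck tiling of \<open>\<lambda>\<^sup>+\<setminus>\<mu>\<close> the node \<open>l\<close> is a singleton tile, and
  conversely adjoining the tile \<open>{l}\<close> to a tiling of \<open>\<lambda>\<setminus>\<mu>\<close> keeps it cover-expansive.
\<close>

section \<open>Tiles\<close>

definition NW :: "node \<Rightarrow> node" where "NW n = (fst n + 1, snd n)"

lemma col_NE [simp]: "col (NE x) = col x + 1" by (simp add: col_def NE_def)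
lemma col_SE [simp]: "col (SE x) = col x + 1" by (simp add: col_def SE_def)
lemma col_SW [simp]: "col (SW x) = col x - 1" by (simp add: col_def SW_def)
lemma col_NW [simp]: "col (NW x) = col x - 1" by (simp add: col_def NW_def)

lemma SW_NE [simp]: "SW (NE x) = x" by (simp add: SW_def NE_def)
lemma SE_NW [simp]: "SE (NW x) = x" by (simp add: SE_def NW_def)
lemma SE_eq_iff: "SE a = b \<longleftrightarrow> a = NW b" by (auto simp: SE_def NW_def)
lemma SW_eq_iff: "SW a = b \<longleftrightarrow> a = NE b" by (auto simp: SW_def NE_def)

lemma neighbours_neq [simp]: "NE x \<noteq> x" "SE x \<noteq> x" "SW x \<noteq> x" "NW x \<noteq> x"
  by (auto dest: arg_cong[of _ _ col])

lemma is_tile_path: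
  assumes "is_tile T"
  obtains ns where "set ns = T"
    "\<forall>i. Suc i < length ns \<longrightarrow> ns ! Suc i \<in> {NE (ns ! i), SE (ns ! i)}"
    "\<forall>i<length ns. col (ns ! i) = col (ns ! 0) + int i"
proof -
  obtain ns where ns: "set ns = T"
    and step: "\<forall>i. Suc i < length ns \<longrightarrow> ns ! Suc i \<in> {NE (ns ! i), SE (ns ! i)}"
    using assms unfolding is_tile_def by blast
  have "col (ns ! i) = col (ns ! 0) + int i" if "i < length ns" for i
    using that
  proof (induction i)
    case (Suc i)
    then have "ns ! Suc i \<in> {NE (ns ! i), SE (ns ! i)}" using step by blast
    then show ?case using Suc by auto
  qed simp
  then show ?thesis using that ns step by blast
qed

lemma tile_col_inj:
  assumes "is_tile T" "x \<in> T" "y \<in> T" "col x = col y"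
  shows "x = y"
proof -
  obtain ns where ns: "set ns = T" and c: "\<forall>i<length ns. col (ns ! i) = col (ns ! 0) + int i"
    using is_tile_path[OF assms(1)] by blast
  obtain i k where "i < length ns" "x = ns ! i" "k < length ns" "y = ns ! k"
    using assms(2,3) ns by (metis in_set_conv_nth)
  with c assms(4) show ?thesis by auto
qed

lemma tile_step_right:
  assumes "is_tile T" "x \<in> T" "y \<in> T" "col x < col y"
  shows "NE x \<in> T \<or> SE x \<in> T"
proof -
  obtain ns where ns: "set ns = T"
    and step: "\<forall>i. Suc i < length ns \<longrightarrow> ns ! Suc i \<in> {NE (ns ! i), SE (ns ! i)}"
    and c: "\<forall>i<length ns. col (ns ! i) = col (ns ! 0) + int i"
    using is_tile_path[OF assms(1)] by blast
  obtain i k where i: "i < length ns" "x = ns ! i" and k: "k < length ns" "y = ns ! k"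
    using assms(2,3) ns by (metis in_set_conv_nth)
  have "col x = col (ns ! 0) + int i" "col y = col (ns ! 0) + int k" using c i k by simp_all
  then have "Suc i < length ns" using assms(4) k(1) by linarith
  then have "ns ! Suc i \<in> T" "ns ! Suc i \<in> {NE x, SE x}" using ns step i(2) by auto
  then show ?thesis by auto
qed

lemma tile_step_left:
  assumes "is_tile T" "x \<in> T" "y \<in> T" "col y < col x"
  shows "SW x \<in> T \<or> NW x \<in> T"
proof -
  obtain ns where ns: "set ns = T"
    and step: "\<forall>i. Suc i < length ns \<longrightarrow> ns ! Suc i \<in> {NE (ns ! i), SE (ns ! i)}"
    and c: "\<forall>i<length ns. col (ns ! i) = col (ns ! 0) + int i"
    using is_tile_path[OF assms(1)] by blast
  obtain i k where i: "i < length ns" "x = ns ! i" and k: "k < length ns" "y = ns ! k"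
    using assms(2,3) ns by (metis in_set_conv_nth)
  have "col x = col (ns ! 0) + int i" "col y = col (ns ! 0) + int k" using c i k by simp_all
  then obtain i' where i': "i = Suc i'" using assms(4) by (cases i) auto
  then have "ns ! i' \<in> T" "x \<in> {NE (ns ! i'), SE (ns ! i')}" using ns step i by auto
  then show ?thesis by (auto simp: NW_def SE_def)
qed

lemma tile_eq_singleton:
  assumes "is_tile T" "x \<in> T" "NE x \<notin> T" "SE x \<notin> T" "SW x \<notin> T" "NW x \<notin> T"
  shows "T = {x}"
proof -
  have "y = x" if "y \<in> T" for y
  proof (rule tile_col_inj[OF assms(1) that assms(2)])
    have "\<not> col x < col y" using tile_step_right[OF assms(1,2) that] assms(3,4) by blast
    moreover have "\<not> col y < col x" using tile_step_left[OF assms(1,2) that] assms(5,6) by blast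
    ultimately show "col y = col x" by linarith
  qed
  then show ?thesis using assms(2) by blast
qed

lemma tile_start:
  assumes "is_tile T"
  shows "tile_start T \<in> T" "\<And>y. y \<in> T \<Longrightarrow> col (tile_start T) \<le> col y"
proof -
  obtain ns where ns: "set ns = T" "ns \<noteq> []" using assms unfolding is_tile_def by blast
  have fin: "finite (col ` T)" "col ` T \<noteq> {}" using ns by auto
  obtain x where x: "x \<in> T" "col x = Min (col ` T)" using Min_in[OF fin] by auto
  have least: "col x \<le> col y" if "y \<in> T" for y using x(2) fin(1) that by simp
  have "\<exists>!n. n \<in> T \<and> (\<forall>m\<in>T. col n \<le> col m)"
  proof (rule ex1I[of _ x])
    fix n assume n: "n \<in> T \<and> (\<forall>m\<in>T. col n \<le> col m)"
    then have "col n = col x" using least x(1) by (meson order_antisym)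
    then show "n = x" using tile_col_inj[OF assms] n x(1) by blast
  qed (use x(1) least in blast)
  then have "tile_start T \<in> T \<and> (\<forall>m\<in>T. col (tile_start T) \<le> col m)"
    unfolding tile_start_def by (rule theI')
  then show "tile_start T \<in> T" "\<And>y. y \<in> T \<Longrightarrow> col (tile_start T) \<le> col y" by simp_all
qed

lemma tile_end:
  assumes "is_tile T"
  shows "tile_end T \<in> T" "\<And>y. y \<in> T \<Longrightarrow> col y \<le> col (tile_end T)"
proof -
  obtain ns where ns: "set ns = T" "ns \<noteq> []" using assms unfolding is_tile_def by blast
  have fin: "finite (col ` T)" "col ` T \<noteq> {}" using ns by auto
  obtain x where x: "x \<in> T" "col x = Max (col ` T)" using Max_in[OF fin] by auto
  have greatest: "col y \<le> col x" if "y \<in> T" for y using x(2) fin(1) that by simp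
  have "\<exists>!n. n \<in> T \<and> (\<forall>m\<in>T. col m \<le> col n)"
  proof (rule ex1I[of _ x])
    fix n assume n: "n \<in> T \<and> (\<forall>m\<in>T. col m \<le> col n)"
    then have "col n = col x" using greatest x(1) by (meson order_antisym)
    then show "n = x" using tile_col_inj[OF assms] n x(1) by blast
  qed (use x(1) greatest in blast)
  then have "tile_end T \<in> T \<and> (\<forall>m\<in>T. col m \<le> col (tile_end T))"
    unfolding tile_end_def by (rule theI')
  then show "tile_end T \<in> T" "\<And>y. y \<in> T \<Longrightarrow> col y \<le> col (tile_end T)" by simp_all
qed

lemma tile_start_singleton [simp]: "tile_start {n} = n"
  unfolding tile_start_def by (rule the_equality) auto

lemma tile_end_singleton [simp]: "tile_end {n} = n"
  unfolding tile_end_def by (rule the_equality) auto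

lemma is_dyck_tile_singleton: "is_dyck_tile {n}"
  unfolding is_dyck_tile_def is_tile_def by (auto intro!: exI[of _ "[n]"])

section \<open>Cover-expansive tilings along a column\<close>

lemma tile_of_eq:
  assumes "partition_on S P" "T \<in> P" "x \<in> T"
  shows "tile_of P x = T"
  unfolding tile_of_def
proof (rule the_equality)
  fix U assume "U \<in> P \<and> x \<in> U"
  then show "U = T" using assms partition_onD2[OF assms(1)] by (auto simp: disjoint_def)
qed (use assms in simp)

lemma tile_of_mem:
  assumes "partition_on S P" "x \<in> S"
  shows "tile_of P x \<in> P" "x \<in> tile_of P x"
proof -
  obtain T where "T \<in> P" "x \<in> T" using assms partition_onD1[OF assms(1)] by blast
  then show "tile_of P x \<in> P" "x \<in> tile_of P x" using tile_of_eq[OF assms(1)] by auto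
qed

lemma tile_of_subset:
  assumes "partition_on S P" "x \<in> S"
  shows "tile_of P x \<subseteq> S"
proof -
  have "S = \<Union>P" by (rule partition_onD1[OF assms(1)])
  then show ?thesis using tile_of_mem(1)[OF assms] by blast
qed

lemma tile_of_eq_if_mem:
  "partition_on S P \<Longrightarrow> x \<in> S \<Longrightarrow> z \<in> tile_of P x \<Longrightarrow> tile_of P z = tile_of P x"
  by (rule tile_of_eq[OF _ tile_of_mem(1)])

lemma dyck_tiling_is_tile: "dyck_tiling S P \<Longrightarrow> T \<in> P \<Longrightarrow> is_tile T"
  by (simp add: dyck_tiling_def is_dyck_tile_def)

lemma cover_expansiveD_SE:
  "cover_expansive S P \<Longrightarrow> a \<in> S \<Longrightarrow> SE a \<in> S \<Longrightarrow>
   col (tile_start (tile_of P (SE a))) \<le> col (tile_start (tile_of P a))"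
  unfolding cover_expansive_def by blast

lemma cover_expansiveD_SW:
  "cover_expansive S P \<Longrightarrow> a \<in> S \<Longrightarrow> SW a \<in> S \<Longrightarrow>
   col (tile_end (tile_of P a)) \<le> col (tile_end (tile_of P (SW a)))"
  unfolding cover_expansive_def by blast

lemma tile_of_NE_eq:
  assumes P: "dyck_tiling S P" "cover_expansive S P"
    and y: "y \<in> S" "NE y \<in> S" "SE y \<notin> tile_of P y"
  shows "tile_of P (NE y) = tile_of P y"
proof -
  have part: "partition_on S P" using P(1) by (simp add: dyck_tiling_def)
  define T U where "T = tile_of P (NE y)" and "U = tile_of P y"
  have T: "T \<in> P" "NE y \<in> T" and U: "U \<in> P" "y \<in> U"
    using tile_of_mem[OF part] y unfolding T_def U_def by auto
  have "col (NE y) \<le> col (tile_end T)"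
    using tile_end(2)[OF dyck_tiling_is_tile[OF P(1) T(1)] T(2)] .
  also have "\<dots> \<le> col (tile_end U)"
    using cover_expansiveD_SW[OF P(2) y(2)] y(1) unfolding T_def U_def by simp
  finally have "col y < col (tile_end U)" by simp
  then have "NE y \<in> U \<or> SE y \<in> U"
    using tile_step_right dyck_tiling_is_tile[OF P(1) U(1)] U(2) tile_end(1) by blast
  then have "NE y \<in> U" using y(3) U_def by blast
  then show ?thesis using tile_of_eq[OF part U(1)] U_def by simp
qed

lemma tile_of_NW_eq:
  assumes P: "dyck_tiling S P" "cover_expansive S P"
    and y: "y \<in> S" "NW y \<in> S" "SW y \<notin> tile_of P y"
  shows "tile_of P (NW y) = tile_of P y"
proof -
  have part: "partition_on S P" using P(1) by (simp add: dyck_tiling_def)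
  define T U where "T = tile_of P (NW y)" and "U = tile_of P y"
  have T: "T \<in> P" "NW y \<in> T" and U: "U \<in> P" "y \<in> U"
    using tile_of_mem[OF part] y unfolding T_def U_def by auto
  have "col (tile_start U) \<le> col (tile_start T)"
    using cover_expansiveD_SE[OF P(2) y(2)] y(1) unfolding T_def U_def by simp
  also have "\<dots> \<le> col (NW y)" using tile_start(2)[OF dyck_tiling_is_tile[OF P(1) T(1)] T(2)] .
  finally have "col (tile_start U) < col y" by simp
  then have "SW y \<in> U \<or> NW y \<in> U"
    using tile_step_left dyck_tiling_is_tile[OF P(1) U(1)] U(2) tile_start(1) by blast
  then have "NW y \<in> U" using y(3) U_def by blast
  then show ?thesis using tile_of_eq[OF part U(1)] U_def by simp
qed

definition diag :: "node \<Rightarrow> nat \<Rightarrow> node" where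
  "diag m k = (fst m + int k, snd m + int k)"

lemma diag_0 [simp]: "diag m 0 = m" by (simp add: diag_def)
lemma col_diag [simp]: "col (diag m k) = col m" by (simp add: diag_def col_def)
lemma SE_diag_Suc [simp]: "SE (diag m (Suc k)) = NE (diag m k)" by (simp add: diag_def SE_def NE_def)
lemma SW_diag_Suc [simp]: "SW (diag m (Suc k)) = NW (diag m k)" by (simp add: diag_def SW_def NW_def)
lemma diag_Suc_neq [simp]: "diag m (Suc k) \<noteq> diag m k" by (simp add: diag_def)

lemma diag_tiles_avoid_SE_SW:
  assumes P: "dyck_tiling S P" "cover_expansive S P"
    and m: "SE m \<notin> S" "SW m \<notin> S" and diag: "\<And>k. k \<le> N \<Longrightarrow> diag m k \<in> S"
  shows "k \<le> N \<Longrightarrow>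
    SE (diag m k) \<notin> tile_of P (diag m k) \<and> SW (diag m k) \<notin> tile_of P (diag m k)"
proof (induction k)
  case 0
  have "partition_on S P" using P(1) by (simp add: dyck_tiling_def)
  then have "tile_of P m \<subseteq> S" using tile_of_subset diag[of 0] by simp
  then show ?case using m by auto
next
  case (Suc k)
  have part: "partition_on S P" using P(1) by (simp add: dyck_tiling_def)
  define x y where "x = diag m (Suc k)" and "y = diag m k"
  have xy: "x \<in> S" "y \<in> S" using diag Suc.prems unfolding x_def y_def by simp_all
  have IH: "SE y \<notin> tile_of P y" "SW y \<notin> tile_of P y" using Suc unfolding y_def by simp_all
  have "tile_of P x \<noteq> tile_of P y"
  proof
    assume "tile_of P x = tile_of P y"
    then have "x \<in> tile_of P y" using tile_of_mem(2)[OF part xy(1)] by simp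
    moreover have "col x = col y" unfolding x_def y_def by simp
    ultimately have "x = y"
      by (rule tile_col_inj[OF dyck_tiling_is_tile[OF P(1) tile_of_mem(1)[OF part xy(2)]] _
            tile_of_mem(2)[OF part xy(2)]])
    then show False unfolding x_def y_def by simp
  qed
  moreover have "tile_of P x = tile_of P y" if "SE x \<in> tile_of P x"
  proof -
    have "NE y \<in> tile_of P x" using that unfolding x_def y_def by simp
    then have "tile_of P (NE y) = tile_of P x" "NE y \<in> S"
      using tile_of_eq_if_mem[OF part xy(1)] tile_of_subset[OF part xy(1)] by auto
    then show ?thesis using tile_of_NE_eq[OF P xy(2) _ IH(1)] by simp
  qed
  moreover have "tile_of P x = tile_of P y" if "SW x \<in> tile_of P x"
  proof -
    have "NW y \<in> tile_of P x" using that unfolding x_def y_def by simp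
    then have "tile_of P (NW y) = tile_of P x" "NW y \<in> S"
      using tile_of_eq_if_mem[OF part xy(1)] tile_of_subset[OF part xy(1)] by auto
    then show ?thesis using tile_of_NW_eq[OF P xy(2) _ IH(2)] by simp
  qed
  ultimately show ?case unfolding x_def by blast
qed

definition ce_dyck_tilings :: "node set \<Rightarrow> node set set set" where
  "ce_dyck_tilings S = {P. dyck_tiling S P \<and> cover_expansive S P}"

lemma tile_of_insert_singleton: "y \<noteq> l \<Longrightarrow> tile_of (insert {l} P) y = tile_of P y"
  unfolding tile_of_def by (metis insert_iff singletonD)

lemma tile_of_insert_singleton_self: "l \<notin> \<Union>P \<Longrightarrow> tile_of (insert {l} P) l = {l}"
  unfolding tile_of_def by (rule the_equality) auto

lemma partition_on_insert_singleton:
  "l \<notin> \<Union>P \<Longrightarrow> l \<notin> S \<Longrightarrow> partition_on (insert l S) (insert {l} P) \<longleftrightarrow> partition_on S P"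
  using partition_on_insert[of "{l}" P "insert l S"] by (simp add: disjnt_def)

lemma ce_dyck_tilings_insert_singleton:
  assumes P: "P \<in> ce_dyck_tilings S" and l: "l \<notin> S" "NE l \<notin> S" "NW l \<notin> S"
    and start: "SE l \<in> S \<Longrightarrow> col (tile_start (tile_of P (SE l))) \<le> col l"
    and stop: "SW l \<in> S \<Longrightarrow> col l \<le> col (tile_end (tile_of P (SW l)))"
  shows "insert {l} P \<in> ce_dyck_tilings (insert l S)"
proof -
  have dt: "dyck_tiling S P" and ce: "cover_expansive S P"
    using P by (simp_all add: ce_dyck_tilings_def)
  have part: "partition_on S P" using dt by (simp add: dyck_tiling_def)
  have lP: "l \<notin> \<Union>P" using partition_onD1[OF part] l(1) by simp
  have "dyck_tiling (insert l S) (insert {l} P)"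
    using dt partition_on_insert_singleton[OF lP l(1)] is_dyck_tile_singleton
    by (simp add: dyck_tiling_def)
  moreover have "cover_expansive (insert l S) (insert {l} P)"
    unfolding cover_expansive_def
  proof (intro conjI allI impI)
    fix a assume a: "a \<in> insert l S \<and> SE a \<in> insert l S"
    moreover have "SE a \<noteq> l" using a l(3) by (auto simp: SE_eq_iff)
    ultimately show "col (tile_start (tile_of (insert {l} P) (SE a)))
        \<le> col (tile_start (tile_of (insert {l} P) a))"
      using start cover_expansiveD_SE[OF ce, of a]
      by (cases "a = l")
        (auto simp: tile_of_insert_singleton tile_of_insert_singleton_self[OF lP])
  next
    fix a assume a: "a \<in> insert l S \<and> SW a \<in> insert l S"
    moreover have "SW a \<noteq> l" using a l(2) by (auto simp: SW_eq_iff)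
    ultimately show "col (tile_end (tile_of (insert {l} P) a))
        \<le> col (tile_end (tile_of (insert {l} P) (SW a)))"
      using stop cover_expansiveD_SW[OF ce, of a]
      by (cases "a = l")
        (auto simp: tile_of_insert_singleton tile_of_insert_singleton_self[OF lP])
  qed
  ultimately show ?thesis by (simp add: ce_dyck_tilings_def)
qed

lemma ce_dyck_tilings_remove_singleton:
  assumes Q: "Q \<in> ce_dyck_tilings (insert l S)" and lQ: "{l} \<in> Q" and l: "l \<notin> S"
  shows "Q - {{l}} \<in> ce_dyck_tilings S"
proof -
  define P where "P = Q - {{l}}"
  have dt: "dyck_tiling (insert l S) Q" and ce: "cover_expansive (insert l S) Q"
    using Q by (simp_all add: ce_dyck_tilings_def)
  have QP: "Q = insert {l} P" using lQ P_def by auto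
  have "disjoint Q" using dt by (simp add: dyck_tiling_def partition_on_def)
  then have lP: "l \<notin> \<Union>P" using lQ disjointD unfolding P_def by blast
  have tiles: "tile_of Q y = tile_of P y" if "y \<in> S" for y
    using QP tile_of_insert_singleton that l by metis
  have "dyck_tiling S P"
    using dt partition_on_insert_singleton[OF lP l] unfolding QP by (simp add: dyck_tiling_def)
  moreover have "cover_expansive S P"
    unfolding cover_expansive_def
  proof (intro conjI allI impI)
    fix a assume "a \<in> S \<and> SE a \<in> S"
    then show "col (tile_start (tile_of P (SE a))) \<le> col (tile_start (tile_of P a))"
      using cover_expansiveD_SE[OF ce, of a] tiles by simp
  next
    fix a assume "a \<in> S \<and> SW a \<in> S"
    then show "col (tile_end (tile_of P a)) \<le> col (tile_end (tile_of P (SW a)))"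
      using cover_expansiveD_SW[OF ce, of a] tiles by simp
  qed
  ultimately show ?thesis unfolding P_def ce_dyck_tilings_def by simp
qed

lemma diag_tiles_above_top:
  assumes P: "P \<in> ce_dyck_tilings S"
    and m: "SE m \<notin> S" "SW m \<notin> S" and diag: "\<And>k. k \<le> K \<Longrightarrow> diag m k \<in> S"
  shows "SE (diag m (Suc K)) \<in> S \<Longrightarrow> col (tile_start (tile_of P (SE (diag m (Suc K))))) \<le> col m"
    and "SW (diag m (Suc K)) \<in> S \<Longrightarrow> col m \<le> col (tile_end (tile_of P (SW (diag m (Suc K)))))"
proof -
  have dt: "dyck_tiling S P" and ce: "cover_expansive S P"
    using P by (simp_all add: ce_dyck_tilings_def)
  have part: "partition_on S P" using dt by (simp add: dyck_tiling_def)
  define y where "y = diag m K"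
  have y: "y \<in> S" "SE y \<notin> tile_of P y" "SW y \<notin> tile_of P y"
    using diag diag_tiles_avoid_SE_SW[OF dt ce m, of K K] unfolding y_def by simp_all
  have U: "is_tile (tile_of P y)" "y \<in> tile_of P y"
    using dyck_tiling_is_tile[OF dt tile_of_mem(1)[OF part y(1)]] tile_of_mem(2)[OF part y(1)] .
  have col_y: "col y = col m" unfolding y_def by simp
  show "col (tile_start (tile_of P (SE (diag m (Suc K))))) \<le> col m"
    if "SE (diag m (Suc K)) \<in> S"
    using tile_of_NE_eq[OF dt ce y(1) _ y(2)] tile_start(2)[OF U] col_y that
    unfolding y_def by simp
  show "col m \<le> col (tile_end (tile_of P (SW (diag m (Suc K)))))"
    if "SW (diag m (Suc K)) \<in> S"
    using tile_of_NW_eq[OF dt ce y(1) _ y(3)] tile_end(2)[OF U] col_y that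
    unfolding y_def by simp
qed

lemma diag_top_singleton_tile:
  assumes Q: "Q \<in> ce_dyck_tilings S" and l: "l = diag m K" "NE l \<notin> S" "NW l \<notin> S"
    and m: "SE m \<notin> S" "SW m \<notin> S" and diag: "\<And>k. k \<le> K \<Longrightarrow> diag m k \<in> S"
  shows "{l} \<in> Q"
proof -
  have dt: "dyck_tiling S Q" and ce: "cover_expansive S Q"
    using Q by (simp_all add: ce_dyck_tilings_def)
  have part: "partition_on S Q" using dt by (simp add: dyck_tiling_def)
  have lS: "l \<in> S" using diag l(1) by simp
  have SE_SW: "SE l \<notin> tile_of Q l" "SW l \<notin> tile_of Q l"
    using diag_tiles_avoid_SE_SW[OF dt ce m diag, of K] l(1) by simp_all
  have NE_NW: "NE l \<notin> tile_of Q l" "NW l \<notin> tile_of Q l"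
    using tile_of_subset[OF part lS] l(2,3) by blast+
  have "tile_of Q l = {l}"
    using tile_eq_singleton[OF dyck_tiling_is_tile[OF dt tile_of_mem(1)[OF part lS]]
        tile_of_mem(2)[OF part lS] NE_NW(1) SE_SW NE_NW(2)] .
  then show ?thesis using tile_of_mem(1)[OF part lS] by simp
qed

lemma ce_dyck_tilings_insert_diag:
  assumes l: "l = diag m K" "l \<notin> S" "NE l \<notin> S" "NW l \<notin> S"
    and m: "SE m \<notin> S" "SW m \<notin> S" and diag: "\<And>k. k < K \<Longrightarrow> diag m k \<in> S"
  shows "ce_dyck_tilings (insert l S) = insert {l} ` ce_dyck_tilings S"
proof
  show "insert {l} ` ce_dyck_tilings S \<subseteq> ce_dyck_tilings (insert l S)"
  proof
    fix Q assume "Q \<in> insert {l} ` ce_dyck_tilings S"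
    then obtain P where P: "P \<in> ce_dyck_tilings S" and Q: "Q = insert {l} P" by blast
    have top: "\<exists>K'. K = Suc K'" if "SE l \<in> S \<or> SW l \<in> S"
      using that l(1) m by (cases K) auto
    have "col (tile_start (tile_of P (SE l))) \<le> col l" if "SE l \<in> S"
      using top diag_tiles_above_top(1)[OF P m, of "K - 1"] diag that l(1) by fastforce
    moreover have "col l \<le> col (tile_end (tile_of P (SW l)))" if "SW l \<in> S"
      using top diag_tiles_above_top(2)[OF P m, of "K - 1"] diag that l(1) by fastforce
    ultimately show "Q \<in> ce_dyck_tilings (insert l S)"
      unfolding Q using ce_dyck_tilings_insert_singleton[OF P l(2-4)] by blast
  qed
next
  show "ce_dyck_tilings (insert l S) \<subseteq> insert {l} ` ce_dyck_tilings S"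
  proof
    fix Q assume Q: "Q \<in> ce_dyck_tilings (insert l S)"
    have "SE m \<noteq> l" "SW m \<noteq> l" using l(1) by (auto dest: arg_cong[of _ _ col])
    moreover have "\<And>k. k \<le> K \<Longrightarrow> diag m k \<in> insert l S" using diag l(1) by (auto simp: le_less)
    ultimately have "{l} \<in> Q" using diag_top_singleton_tile[OF Q l(1)] l(3,4) m by auto
    then have "Q = insert {l} (Q - {{l}})" "Q - {{l}} \<in> ce_dyck_tilings S"
      using ce_dyck_tilings_remove_singleton[OF Q _ l(2)] by auto
    then show "Q \<in> insert {l} ` ce_dyck_tilings S" by blast
  qed
qed

lemma card_ce_dyck_tilings_insert_diag:
  assumes "l = diag m K" "l \<notin> S" "NE l \<notin> S" "NW l \<notin> S"
    and "SE m \<notin> S" "SW m \<notin> S" and "\<And>k. k < K \<Longrightarrow> diag m k \<in> S"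
  shows "card (ce_dyck_tilings (insert l S)) = card (ce_dyck_tilings S)"
proof -
  have "{l} \<notin> P" if "P \<in> ce_dyck_tilings S" for P
    using that assms(2) partition_onD1 by (fastforce simp: ce_dyck_tilings_def dyck_tiling_def)
  then have "inj_on (insert {l}) (ce_dyck_tilings S)" by (metis inj_onI insert_ident)
  then show ?thesis using ce_dyck_tilings_insert_diag[OF assms] card_image by metis
qed

section \<open>Young diagrams\<close>

lemma young_pos: "n \<in> young lam \<Longrightarrow> 1 \<le> fst n \<and> 1 \<le> snd n"
  by (auto simp: young_def)

lemma young_downward_closed:
  assumes lam: "is_partition lam" and n: "(a, b) \<in> young lam"
    and "1 \<le> a'" "a' \<le> a" "1 \<le> b'" "b' \<le> b"
  shows "(a', b') \<in> young lam"
proof -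
  have sorted: "sorted_wrt (\<ge>) lam" using lam by (simp add: is_partition_def)
  have a: "1 \<le> a" "a \<le> int (length lam)" "b \<le> int (lam ! nat (a - 1))"
    using n by (auto simp: young_def)
  have "lam ! nat (a - 1) \<le> lam ! nat (a' - 1)"
  proof (cases "a' = a")
    case False
    then have "nat (a' - 1) < nat (a - 1)" "nat (a - 1) < length lam" using assms a by auto
    then show ?thesis using sorted_wrt_nth_less[OF sorted] by blast
  qed simp
  then show ?thesis using assms a by (auto simp: young_def)
qed

lemma NE_NW_notin_young_insert:
  assumes "is_partition lam" "addable lam l" "young lamp = insert l (young lam)"
  shows "NE l \<notin> young lamp" "NW l \<notin> young lamp"
proof -
  have l: "l \<notin> young lam" "1 \<le> fst l" "1 \<le> snd l"
    using assms(2) young_pos[of l lamp] assms(3) by (auto simp: addable_def)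
  have "NE l \<notin> young lam" "NW l \<notin> young lam"
    using l young_downward_closed[OF assms(1), of _ _ "fst l" "snd l"]
    by (force simp: NE_def NW_def)+
  then show "NE l \<notin> young lamp" "NW l \<notin> young lamp" using assms(3) by auto
qed

lemma addable_pos: "addable mu m \<Longrightarrow> 1 \<le> fst m \<and> 1 \<le> snd m"
  by (auto simp: addable_def dest: young_pos)

lemma addable_below_in_young:
  assumes "addable mu m" "1 \<le> a" "a \<le> fst m" "1 \<le> b" "b \<le> snd m" "(a, b) \<noteq> m"
  shows "(a, b) \<in> young mu"
proof -
  obtain nu where "is_partition nu" "young nu = insert m (young mu)"
    using assms(1) by (auto simp: addable_def)
  then show ?thesis using young_downward_closed[of nu "fst m" "snd m" a b] assms by auto
qed

lemma addable_SE_notin_skew: "addable mu m \<Longrightarrow> SE m \<notin> young lam - young mu"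
  using addable_below_in_young[of mu m "fst m - 1" "snd m"] young_pos[of "SE m" lam]
  by (auto simp: SE_def prod_eq_iff)

lemma addable_SW_notin_skew: "addable mu m \<Longrightarrow> SW m \<notin> young lam - young mu"
  using addable_below_in_young[of mu m "fst m" "snd m - 1"] young_pos[of "SW m" lam]
  by (auto simp: SW_def prod_eq_iff)

lemma young_diag_downward_closed:
  assumes "is_partition lam" "diag m K \<in> young lam" "1 \<le> fst m" "1 \<le> snd m" "k \<le> K"
  shows "diag m k \<in> young lam"
  using young_downward_closed[OF assms(1), of "fst m + int K" "snd m + int K"] assms(2-5)
  by (simp add: diag_def)

lemma addable_diag_reaches:
  assumes mu: "is_partition mu" "addable mu m" "young mu \<subseteq> young lam"
    and l: "col m = col l" "l \<in> young lam" "NE l \<notin> young lam"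
  obtains K where "l = diag m K"
proof -
  have "fst m \<le> fst l"
  proof (rule ccontr)
    assume below: "\<not> fst m \<le> fst l"
    then have "(fst m - 1, snd m) \<in> young mu"
      using addable_below_in_young[OF mu(2)] addable_pos[OF mu(2)] young_pos[OF l(2)]
      by (auto simp: prod_eq_iff)
    then have "NE l \<in> young mu"
      using young_downward_closed[OF mu(1)] young_pos[OF l(2)] below l(1)
      by (force simp: NE_def col_def)
    then show False using mu(3) l(3) by blast
  qed
  then have "l = diag m (nat (fst l - fst m))" using l(1) by (simp add: diag_def col_def prod_eq_iff)
  then show ?thesis by (rule that)
qed

lemma young_subset_insert_iff:
  assumes "is_partition mu" "addable mu m" "col m = col l"
    and "young lamp = insert l (young lam)" "NE l \<notin> young lamp"
  shows "young mu \<subseteq> young lamp \<longleftrightarrow> young mu \<subseteq> young lam"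
proof
  assume sub: "young mu \<subseteq> young lamp"
  obtain K where K: "l = diag m K"
    using addable_diag_reaches[OF assms(1,2) sub assms(3)] assms(4,5) by blast
  have "l \<notin> young mu"
  proof
    assume "l \<in> young mu"
    then have "m \<in> young mu"
      using young_diag_downward_closed[OF assms(1), of m K 0] K addable_pos[OF assms(2)] by simp
    then show False using assms(2) by (simp add: addable_def)
  qed
  then show "young mu \<subseteq> young lam" using sub assms(4) by auto
qed (use assms(4) in auto)

lemma diag_in_skew:
  assumes "is_partition lamp" "is_partition mu" "addable mu m"
    and "l = diag m K" "l \<in> young lamp" "k < K"
  shows "diag m k \<in> young lamp - young mu - {l}"
proof -
  have m: "1 \<le> fst m" "1 \<le> snd m" "m \<notin> young mu"
    using addable_pos[OF assms(3)] assms(3) by (simp_all add: addable_def)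
  have "diag m k \<in> young lamp"
    using young_diag_downward_closed[OF assms(1)] assms(4-6) m by simp
  moreover have "diag m k \<notin> young mu"
    using young_diag_downward_closed[OF assms(2), of m k 0] m by auto
  moreover have "diag m k \<noteq> l" using assms(4,6) by (simp add: diag_def)
  ultimately show ?thesis by blast
qed

theorem proposition4p8:
  fixes j :: int and lam mu lamp :: "nat list" and l :: node
  assumes "is_partition lam" and "is_partition mu"
    and "addable lam l" and "col l = j"
    and "\<exists>m. addable mu m \<and> col m = j"
    and "is_partition lamp" and "young lamp = insert l (young lam)"
  shows "e_num lamp mu = e_num lam mu"
proof -
  obtain m where m: "addable mu m" "col m = col l" using assms(4,5) by blast
  have l: "l \<notin> young lam" "l \<in> young lamp" using assms(3,7) by (auto simp: addable_def)
  note NE_NW = NE_NW_notin_young_insert[OF assms(1,3,7)]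
  note sub_iff = young_subset_insert_iff[OF assms(2) m assms(7) NE_NW(1)]
  show ?thesis
  proof (cases "young mu \<subseteq> young lam")
    case False
    then show ?thesis using sub_iff by (simp add: e_num_def)
  next
    case True
    define S where "S = young lam - young mu"
    obtain K where K: "l = diag m K"
      using addable_diag_reaches[OF assms(2) m(1) _ m(2) l(2) NE_NW(1)] True sub_iff by blast
    have "card (ce_dyck_tilings (insert l S)) = card (ce_dyck_tilings S)"
    proof (rule card_ce_dyck_tilings_insert_diag[OF K])
      show "l \<notin> S" "NE l \<notin> S" "NW l \<notin> S" using l(1) NE_NW assms(7) unfolding S_def by auto
      show "SE m \<notin> S" "SW m \<notin> S"
        using addable_SE_notin_skew[OF m(1)] addable_SW_notin_skew[OF m(1)] unfolding S_def .
      show "diag m k \<in> S" if "k < K" for k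
        using diag_in_skew[OF assms(6,2) m(1) K l(2) that] assms(7) unfolding S_def by auto
    qed
    moreover have "young lamp - young mu = insert l S" using l(1) True assms(7) unfolding S_def by auto
    ultimately show ?thesis
      using True sub_iff unfolding S_def by (simp add: e_num_def ce_dyck_tilings_def)
  qed
qed

end
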